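(* Let $\mathbb{F}_q$ be a finite field of characteristic $p$, let $r,v,k,t$ be positive integers, and let $f(x):=x^r h_k(x^v)^t$ where $h_k(x):=x^{k-1}+x^{k-2}+\dots+1$. Let $s:=\gcd(v,q-1)$, $d:=(q-1)/s$ and $e:=v/s$. Suppose that $\gcd(r,s)=\gcd(d,k)=1$, that $\gcd(d,2r+vt(k-1))\le 2$, that $k^{st}\equiv (-1)^{(d+1)(r+1)}\pmod{p}$, and that $d$ is an odd prime. Pick $\omega\in\mathbb{F}_q$ of order $d$. Consider the condition \[( * )\qquad \frac{\zeta^k-\zeta^{-k}}{\zeta-\zeta^{-1}}\in\mu_{st}\ \text{ for every } \zeta\in\mu_d\setminus\mu_1.\] Then: (a) If $( * )$ holds then $f$ permutes $\mathbb{F}_q$. (b) If $d=3$ then $f$ permutes $\mathbb{F}_q$. (c) If $d=5$ then $f$ permutes $\mathbb{F}_q$ if and only if $( * )$ holds. (d) If $d=7$ then $f$ permutes $\mathbb{F}_q$ if and only if either $( * )$ holds or there exists $\epsilon\in\{1,-1\}$ such that \[\left(\frac{\omega^{ike}-\omega^{-ike}}{\omega^{ie}-\omega^{-ie}}\right)^{st}=\omega^{2\epsilon(2r+(k-1)vt)i}\] for every $i\in\{1,2,4\}$. (e) If $d=11$ then $f$ permutes $\mathbb{F}_q$ if and only if either $( * )$ holds or there is some $\psi\in\mathcal{C}$ such that \[\left(\frac{\omega^{ike}-\omega^{-ike}}{\omega^{ie}-\omega^{-ie}}\right)^{st}=\omega^{(2r+(k-1)vt)\psi(i)}\] for every $i\in(\mathbb{F}_{11}^*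 )^2$, where $\mathcal{C}$ is the union of the sets $\{i\mapsto mi : m\in\{\pm3,\pm5\}\}$, $\{i\mapsto 5m^3i^4+m^7i^3-2mi^2-4m^5i : m\in\mathbb{F}_{11}^*\}$ and $\{i\mapsto 4m^3i^4+m^7i^3-2mi^2-5m^5i : m\in\mathbb{F}_{11}^*\}$ (functions $\mathbb{F}_{11}\to\mathbb{F}_{11}$).
   Context: $\mu_n$ denotes the set of $n$-th roots of unity in $\mathbb{F}_q$ (so $\mu_1=\{1\}$). Since $\omega$ has order $d$, $\omega^a$ is well defined for $a\in\mathbb{Z}/d\mathbb{Z}=\mathbb{F}_d$, and integers $i$ are identified with their residues mod $d$. A polynomial permutes $\mathbb{F}_q$ if the induced map is a bijection. *)

theory Defs
  imports "HOL-Number_Theory.Number_Theory"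
begin

definition hk :: "nat \<Rightarrow> 'a::comm_ring_1 \<Rightarrow> 'a" where
  "hk k x = (\<Sum>j<k. x ^ j)"

definition fpoly :: "nat \<Rightarrow> nat \<Rightarrow> nat \<Rightarrow> nat \<Rightarrow> 'a::comm_ring_1 \<Rightarrow> 'a" where
  "fpoly r v k t x = x ^ r * (hk k (x ^ v)) ^ t"

definition roots_unity :: "nat \<Rightarrow> 'a::comm_ring_1 set" where
  "roots_unity n = {x. x ^ n = 1}"

definition has_order :: "'a::comm_ring_1 \<Rightarrow> nat \<Rightarrow> bool" where
  "has_order x n \<longleftrightarrow> 0 < n \<and> x ^ n = 1 \<and> (\<forall>m. 0 < m \<and> m < n \<longrightarrow> x ^ m \<noteq> 1)"

definition cond_star :: "nat \<Rightarrow> nat \<Rightarrow> nat \<Rightarrow> nat \<Rightarrow> 'a::field itself \<Rightarrow> bool" where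
  "cond_star d k s t _ \<longleftrightarrow>
     (\<forall>\<zeta>::'a. \<zeta> \<in> roots_unity d - roots_unity 1 \<longrightarrow>
        (\<zeta> ^ k - inverse \<zeta> ^ k) / (\<zeta> - inverse \<zeta>) \<in> roots_unity (s * t))"

definition ratio :: "'a::field \<Rightarrow> nat \<Rightarrow> nat \<Rightarrow> int \<Rightarrow> 'a" where
  "ratio \<omega> k e i = (\<omega> powi (i * int k * int e) - \<omega> powi (- (i * int k * int e)))
                   / (\<omega> powi (i * int e) - \<omega> powi (- (i * int e)))"

text \<open>nonzero squares of F_11, represented by integers in 1..10\<close>
definition sq11 :: "int set" where
  "sq11 = {i. 1 \<le> i \<and> i \<le> 10 \<and> (\<exists>j. [j ^ 2 = i] (mod 11))}"

text \<open>the set C of maps F_11 -> F_11, represented as integer maps (taken mod 11)\<close>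
definition C11 :: "(int \<Rightarrow> int) set" where
  "C11 = {(\<lambda>i. m * i) | m. m \<in> {3, -3, 5, -5}}
       \<union> {(\<lambda>i. 5 * m^3 * i^4 + m^7 * i^3 - 2 * m * i^2 - 4 * m^5 * i) | m. 1 \<le> m \<and> m \<le> 10}
       \<union> {(\<lambda>i. 4 * m^3 * i^4 + m^7 * i^3 - 2 * m * i^2 - 5 * m^5 * i) | m. 1 \<le> m \<and> m \<le> 10}"

end

theory Submission
  imports Defs "HOL-Computational_Algebra.Polynomial"
begin

(* Since v = s e with s | q - 1 and gcd(r, s) = 1, the map x |-> x^r h(x^s) permutes F_q iff
   y |-> y^r h(y)^s permutes mu_d; for f this is g(y) = y^r h_k(y^e)^(st).  Parametrising mu_d
   by y = w^(2i) and writing h_k(z^2) = z^(k-1) (z^k - z^-k)/(z - z^-1) with z = w^(ie) gives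
   g(w^(2i)) = eta^(i + shift i), where eta = w^c generates mu_d (d does not divide c) and
   eta^(shift i) is the st-th power of that ratio; the congruence on k^(st) makes shift 0 = 0.
   Hence f permutes F_q iff i |-> i + shift i permutes Z/d.  As shift (d - i) = shift i, only
   the profile (shift 1, ..., shift ((d-1)/2)) matters: cond_star says it is zero, and for
   d <= 11 the profiles giving permutations are enumerated by a verified backtracking search,
   the nonzero ones for d = 7 and d = 11 being exactly the exceptional families. *)

lemma card_power_eq_le:
  fixes a :: "'a::field"
  assumes "0 < n"
  shows "card {x::'a. x ^ n = a} \<le> n"
proof -
  let ?p = "monom (1::'a) n + [:-a:]"
  have deg: "degree ?p = n"
    using assms by (subst degree_add_eq_left) (simp_all add: degree_monom_eq)
  then have "?p \<noteq> 0" using assms by auto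
  moreover have "{x. x ^ n = a} = {x. poly ?p x = 0}" by (simp add: poly_monom)
  ultimately show ?thesis using card_poly_roots_bound[of ?p] deg by simp
qed

lemma card_UNIV_field_ge_2: "2 \<le> card (UNIV :: 'a::{finite,field} set)"
  using card_mono[of "UNIV :: 'a set" "{0, 1}"] by simp

lemma power_card_minus_1_eq_1:
  fixes x :: "'a::{finite,field}"
  assumes "x \<noteq> 0"
  shows "x ^ (card (UNIV :: 'a set) - 1) = 1"
proof -
  have "(\<Prod>y\<in>UNIV - {0}. x * y) = (\<Prod>y\<in>UNIV - {0::'a}. y)"
    by (rule prod.reindex_bij_witness[of _ "\<lambda>y. y / x" "\<lambda>y. x * y"]) (use assms in auto)
  moreover have "(\<Prod>y\<in>UNIV - {0}. x * y) = x ^ card (UNIV - {0::'a}) * (\<Prod>y\<in>UNIV - {0::'a}. y)"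
    by (simp add: prod.distrib)
  moreover have "(\<Prod>y\<in>UNIV - {0::'a}. y) \<noteq> 0" by simp
  ultimately show ?thesis by (simp add: card_Diff_singleton)
qed

lemma power_eq_1_if_coprime_exponents:
  fixes z :: "'a::comm_monoid_mult"
  assumes "coprime r s" "z ^ r = 1" "z ^ s = 1"
  shows "z = 1"
proof (cases "r = 0")
  case True
  then show ?thesis using assms by simp
next
  case False
  then obtain a b where ab: "r * a = s * b + gcd r s" using bezout_nat by blast
  have "1 = z ^ (r * a)" using assms(2) by (simp add: power_mult)
  also have "\<dots> = z ^ (s * b) * z" using ab assms(1) by (simp add: power_add mult.commute)
  also have "\<dots> = z" using assms(3) by (simp add: power_mult)
  finally show ?thesis by simp
qed

lemma has_order_pos: "has_order w d \<Longrightarrow> 0 < d"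
  by (simp add: has_order_def)

lemma has_order_nonzero: "has_order (w::'a::field) d \<Longrightarrow> w \<noteq> 0"
  by (auto simp: has_order_def power_0_left)

lemma has_order_power_mod:
  assumes "has_order w d"
  shows "w ^ a = w ^ (a mod d)"
proof -
  have "w ^ a = (w ^ d) ^ (a div d) * w ^ (a mod d)"
    by (simp flip: power_mult power_add)
  then show ?thesis using assms by (simp add: has_order_def)
qed

lemma has_order_power_eq_1_iff:
  assumes "has_order w d"
  shows "w ^ a = 1 \<longleftrightarrow> d dvd a"
proof
  assume "w ^ a = 1"
  then have "w ^ (a mod d) = 1" using has_order_power_mod[OF assms] by simp
  moreover have "a mod d < d" using has_order_pos[OF assms] by simp
  ultimately have "a mod d = 0" using assms by (auto simp: has_order_def)
  then show "d dvd a" by auto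
next
  assume "d dvd a"
  then show "w ^ a = 1" using assms by (auto simp: power_mult has_order_def)
qed

lemma has_order_power_eq_iff:
  fixes w :: "'a::field"
  assumes "has_order w d"
  shows "w ^ a = w ^ b \<longleftrightarrow> a mod d = b mod d"
proof -
  have ordered: "w ^ x = w ^ y \<longleftrightarrow> x = y" if "x \<le> y" "y < d" for x y
  proof -
    have "w ^ y = w ^ x * w ^ (y - x)" using that by (simp flip: power_add)
    then have "w ^ x = w ^ y \<longleftrightarrow> w ^ (y - x) = 1" using has_order_nonzero[OF assms] by auto
    also have "\<dots> \<longleftrightarrow> d dvd (y - x)" by (rule has_order_power_eq_1_iff[OF assms])
    also have "\<dots> \<longleftrightarrow> x = y" using that by (auto dest: dvd_imp_le)
    finally show ?thesis .
  qed
  have "w ^ a = w ^ b \<longleftrightarrow> w ^ (a mod d) = w ^ (b mod d)"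
    using has_order_power_mod[OF assms] by metis
  also have "\<dots> \<longleftrightarrow> a mod d = b mod d"
    using ordered[of "a mod d" "b mod d"] ordered[of "b mod d" "a mod d"] has_order_pos[OF assms]
    by (cases "a mod d \<le> b mod d") auto
  finally show ?thesis .
qed

lemma has_order_power_int:
  fixes w :: "'a::field"
  assumes "has_order w d"
  shows "w powi m = w ^ nat (m mod int d)"
proof -
  have "w powi m = w powi (int d * (m div int d)) * w powi (m mod int d)"
    using has_order_nonzero[OF assms] by (simp flip: power_int_add)
  also have "w powi (int d * (m div int d)) = 1"
    using assms by (simp add: power_int_mult has_order_def)
  also have "w powi (m mod int d) = w ^ nat (m mod int d)"
    using has_order_pos[OF assms] by (simp add: power_int_nonneg_exp)
  finally show ?thesis by simp
qed

lemma has_order_power_eq_power_int_iff: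
  fixes w :: "'a::field"
  assumes "has_order w d"
  shows "w ^ a = w powi m \<longleftrightarrow> int a mod int d = m mod int d"
proof -
  have d: "0 < d" using has_order_pos[OF assms] .
  have "w ^ a = w powi m \<longleftrightarrow> a mod d = nat (m mod int d) mod d"
    using has_order_power_int[OF assms] has_order_power_eq_iff[OF assms] by simp
  also have "\<dots> \<longleftrightarrow> int (a mod d) = m mod int d"
    using d by (auto simp: nat_less_iff)
  also have "\<dots> \<longleftrightarrow> int a mod int d = m mod int d" by (simp add: zmod_int)
  finally show ?thesis .
qed

lemma has_order_power_coprime:
  fixes w :: "'a::field"
  assumes "has_order w d" "coprime a d"
  shows "has_order (w ^ a) d"
  unfolding has_order_def
proof (intro conjI allI impI)
  show "0 < d" using has_order_pos[OF assms(1)] .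
  have "(w ^ a) ^ d = (w ^ d) ^ a" by (simp add: mult.commute flip: power_mult)
  then show "(w ^ a) ^ d = 1" using assms(1) by (simp add: has_order_def)
  fix m assume m: "0 < m \<and> m < d"
  have "\<not> d dvd m" using m by (auto dest: dvd_imp_le)
  then have "\<not> d dvd m * a"
    using assms(2) by (simp add: coprime_commute coprime_dvd_mult_left_iff)
  then show "(w ^ a) ^ m \<noteq> 1"
    using has_order_power_eq_1_iff[OF assms(1)] by (simp add: mult.commute flip: power_mult)
qed

lemma inj_on_powers: "has_order (w::'a::field) d \<Longrightarrow> inj_on (\<lambda>j. w ^ j) {..<d}"
  by (auto simp: inj_on_def has_order_power_eq_iff)

lemma roots_unity_eq_powers:
  fixes w :: "'a::{finite,field}"
  assumes "has_order w d"
  shows "roots_unity d = (\<lambda>j. w ^ j) ` {..<d}"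
proof (rule sym, rule card_seteq)
  have "(w ^ j) ^ d = (w ^ d) ^ j" for j by (simp add: mult.commute flip: power_mult)
  then show "(\<lambda>j. w ^ j) ` {..<d} \<subseteq> roots_unity d"
    using assms by (auto simp: roots_unity_def has_order_def)
  have "card (roots_unity d :: 'a set) \<le> d"
    unfolding roots_unity_def using card_power_eq_le has_order_pos[OF assms] by blast
  then show "card (roots_unity d :: 'a set) \<le> card ((\<lambda>j. w ^ j) ` {..<d})"
    using card_image[OF inj_on_powers[OF assms]] by simp
qed simp

lemma power_image_nonzero_eq_roots_unity:
  fixes s d :: nat
  assumes sd: "s * d = card (UNIV :: 'a::{finite,field} set) - 1"
  shows "(\<lambda>x::'a. x ^ s) ` (UNIV - {0}) = roots_unity d"
proof (rule card_seteq)
  let ?P = "(\<lambda>x::'a. x ^ s) ` (UNIV - {0})"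
  show "finite (roots_unity d :: 'a set)" by simp
  have "(x ^ s) ^ d = 1" if "x \<noteq> (0::'a)" for x
    using power_card_minus_1_eq_1[OF that] sd by (simp flip: power_mult)
  then show "?P \<subseteq> roots_unity d" by (auto simp: roots_unity_def)
  have "0 < s * d" using sd card_UNIV_field_ge_2[where 'a = 'a] by linarith
  then have pos: "0 < s" "0 < d" by auto
  have "s * d = card (UNIV - {0::'a})" using sd by (simp add: card_Diff_singleton)
  also have "\<dots> \<le> card (\<Union>z\<in>?P. {x::'a. x ^ s = z})" by (rule card_mono) auto
  also have "\<dots> \<le> (\<Sum>z\<in>?P. card {x::'a. x ^ s = z})" by (rule card_UN_le) simp
  also have "\<dots> \<le> (\<Sum>z\<in>?P. s)" by (rule sum_mono) (use card_power_eq_le pos in blast)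
  also have "\<dots> = s * card ?P" by simp
  finally have "d \<le> card ?P" using pos by simp
  moreover have "card (roots_unity d :: 'a set) \<le> d"
    unfolding roots_unity_def using card_power_eq_le pos by blast
  ultimately show "card (roots_unity d :: 'a set) \<le> card ?P" by linarith
qed

lemma power_mult_compose_eq_imp_eq:
  fixes h :: "'a::field \<Rightarrow> 'a"
  assumes "coprime r s" "x \<noteq> 0" "x ^ s = y ^ s"
    and "x ^ r * h (x ^ s) = y ^ r * h (y ^ s)" "x ^ r * h (x ^ s) \<noteq> 0"
  shows "x = y"
proof -
  define z where "z = y / x"
  have "x ^ s \<noteq> 0" using assms(2) by simp
  then have y_eq: "y = z * x" and "z ^ s = 1"
    using assms(2,3) by (simp_all add: z_def power_divide)
  then have "y ^ r * h (y ^ s) = z ^ r * (x ^ r * h (x ^ s))"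
    by (simp add: power_mult_distrib mult_ac)
  then have "z ^ r = 1" using assms(4,5) by (metis mult_cancel_right1)
  then have "z = 1" using power_eq_1_if_coprime_exponents[OF assms(1)] \<open>z ^ s = 1\<close> by blast
  then show ?thesis using y_eq by simp
qed

lemma bij_betw_roots_unity_if_bij_power_mult_compose:
  fixes h :: "'a::{finite,field} \<Rightarrow> 'a" and r s d :: nat
  assumes "0 < r" and sd: "s * d = card (UNIV :: 'a set) - 1" and "bij (\<lambda>x. x ^ r * h (x ^ s))"
  shows "bij_betw (\<lambda>y. y ^ r * h y ^ s) (roots_unity d) (roots_unity d)"
    (is "bij_betw ?g ?\<mu> ?\<mu>")
proof -
  let ?f = "\<lambda>x. x ^ r * h (x ^ s)" and ?U = "UNIV - {0::'a}"
  have powers: "(\<lambda>x. x ^ s) ` ?U = ?\<mu>" by (rule power_image_nonzero_eq_roots_unity[OF sd])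
  have f_nonzero: "?f ` ?U = ?U"
    using assms(1,3) by (simp add: bij_def image_set_diff zero_power)
  have "?g ` ?\<mu> = (\<lambda>x. ?f x ^ s) ` ?U"
    by (simp add: powers[symmetric] image_image power_mult_distrib mult.commute flip: power_mult)
  also have "\<dots> = (\<lambda>y. y ^ s) ` (?f ` ?U)" by (simp add: image_image)
  finally have "?g ` ?\<mu> = ?\<mu>" using f_nonzero powers by simp
  then show ?thesis by (simp add: bij_betw_def eq_card_imp_inj_on)
qed

lemma bij_power_mult_compose_if_bij_betw_roots_unity:
  fixes h :: "'a::{finite,field} \<Rightarrow> 'a" and r s d :: nat
  assumes "0 < r" and rs: "coprime r s" and sd: "s * d = card (UNIV :: 'a set) - 1"
    and g: "bij_betw (\<lambda>y. y ^ r * h y ^ s) (roots_unity d) (roots_unity d)"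
  shows "bij (\<lambda>x. x ^ r * h (x ^ s))"
    (is "bij ?f")
proof -
  let ?g = "\<lambda>y. y ^ r * h y ^ s"
  have powers: "x ^ s \<in> roots_unity d" if "x \<noteq> 0" for x :: 'a
    using power_image_nonzero_eq_roots_unity[OF sd] that by auto
  have f_power: "?f x ^ s = ?g (x ^ s)" for x
    by (simp add: power_mult_distrib mult.commute flip: power_mult)
  have "0 < s * d" using sd card_UNIV_field_ge_2[where 'a = 'a] by linarith
  then have "0 < s" "0 \<notin> roots_unity d" by (auto simp: roots_unity_def power_0_left)
  have nonzero: "?f x \<noteq> 0" if "x \<noteq> 0" for x
  proof -
    have "?f x ^ s \<in> roots_unity d" using g powers[OF that] f_power by (force simp: bij_betw_def)
    then show ?thesis using \<open>0 \<notin> roots_unity d\<close> \<open>0 < s\<close> by (metis zero_power)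
  qed
  have "inj ?f"
  proof (rule injI)
    fix x y assume eq: "?f x = ?f y"
    show "x = y"
    proof (cases "x = 0 \<or> y = 0")
      case True
      then show ?thesis using eq nonzero \<open>0 < r\<close> by (metis zero_power mult_zero_left)
    next
      case False
      then have "?g (x ^ s) = ?g (y ^ s)" "x ^ s \<in> roots_unity d" "y ^ s \<in> roots_unity d"
        using eq f_power powers by metis+
      then have "x ^ s = y ^ s" using g by (metis bij_betw_def inj_onD)
      then show "x = y" using power_mult_compose_eq_imp_eq[OF rs] eq nonzero False by blast
    qed
  qed
  then show ?thesis by (simp add: bij_def finite_UNIV_inj_surj)
qed

(* The reduction of Park-Lee and Zieve for polynomials of the shape x^r h(x^s). *)
lemma bij_power_mult_compose_iff:
  fixes h :: "'a::{finite,field} \<Rightarrow> 'a" and r s d :: nat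
  assumes "0 < r" and "coprime r s" and "s * d = card (UNIV :: 'a set) - 1"
  shows "bij (\<lambda>x. x ^ r * h (x ^ s))
    \<longleftrightarrow> bij_betw (\<lambda>y. y ^ r * h y ^ s) (roots_unity d) (roots_unity d)"
  using assms bij_betw_roots_unity_if_bij_power_mult_compose bij_power_mult_compose_if_bij_betw_roots_unity
  by blast

(* For z = exp (i theta) this is sin (k theta) / sin theta. *)
definition sine_ratio :: "nat \<Rightarrow> 'a::field \<Rightarrow> 'a" where
  "sine_ratio k z = (z ^ k - inverse z ^ k) / (z - inverse z)"

lemma sine_ratio_inverse: "sine_ratio k (inverse z) = sine_ratio k z"
proof -
  have "(a - b) / (c - e) = (b - a) / (e - c)" for a b c e :: 'a
    by (metis minus_diff_eq minus_divide_divide)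
  then show ?thesis unfolding sine_ratio_def by simp
qed

lemma sine_ratio_nonzero:
  fixes z :: "'a::field"
  assumes "z \<noteq> 0" "z ^ 2 \<noteq> 1" "(z ^ 2) ^ k \<noteq> 1"
  shows "sine_ratio k z \<noteq> 0"
proof -
  have "z - inverse z \<noteq> 0"
    using assms(1,2) by (auto simp: field_simps power2_eq_square)
  moreover have "z ^ k - inverse z ^ k \<noteq> 0"
  proof
    assume "z ^ k - inverse z ^ k = 0"
    then have "z ^ k * z ^ k = 1" using assms(1) by (simp add: field_simps power_inverse)
    then show False using assms(3) by (simp add: power2_eq_square power_mult_distrib)
  qed
  ultimately show ?thesis by (simp add: sine_ratio_def)
qed

lemma hk_square_eq_sine_ratio:
  fixes z :: "'a::field"
  assumes z: "z \<noteq> 0" and z2: "z ^ 2 \<noteq> 1" and k: "0 < k"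
  shows "hk k (z ^ 2) = z ^ (k - 1) * sine_ratio k z"
proof -
  obtain m where k_eq: "k = Suc m" using k by (cases k) auto
  have three: "m * 3 = m + (m + m)" by simp
  have num: "(z ^ (2 * k) - 1) / z = z ^ (k - 1) * (z ^ k - inverse z ^ k)"
    using z by (simp add: k_eq field_simps power_inverse mult_2 power_Suc2 three flip: power_add)
  have den: "z - inverse z = (z ^ 2 - 1) / z"
    using z by (simp add: field_simps power2_eq_square)
  have "hk k (z ^ 2) = (z ^ (2 * k) - 1) / (z ^ 2 - 1)"
    unfolding hk_def using z2
    by (simp add: sum_gp_strict divide_simps power_mult) (simp add: algebra_simps)
  also have "\<dots> = ((z ^ (2 * k) - 1) / z) / ((z ^ 2 - 1) / z)"
    using z by simp
  also have "\<dots> = z ^ (k - 1) * sine_ratio k z"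
    unfolding sine_ratio_def num den[symmetric] by (simp only: times_divide_eq_right)
  finally show ?thesis .
qed

lemma ratio_eq_sine_ratio: "ratio w k e (int i) = sine_ratio k (w ^ (i * e))"
proof -
  have "w powi (int i * int k * int e) = (w ^ (i * e)) ^ k"
    by (simp add: mult_ac power_mult flip: of_nat_mult)
  moreover have "w powi (int i * int e) = w ^ (i * e)"
    by (simp flip: of_nat_mult)
  ultimately show ?thesis
    unfolding ratio_def sine_ratio_def power_int_minus by (simp add: power_inverse)
qed

(* For d = 2m + 1 and xs = [B 1, ..., B m] with B symmetric (B (d - i) = B i, B 0 = 0), these
   are the values (j + B j) mod d for j = 0 and for j = i, d - i (1 <= i <= m). *)
definition folded_values :: "nat \<Rightarrow> nat list \<Rightarrow> nat list" where
  "folded_values d xs =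
     0 # concat (map (\<lambda>(i, x). [(i + x) mod d, (d - i + x) mod d]) (zip [1..<Suc (length xs)] xs))"

definition admissible_extensions :: "nat \<Rightarrow> nat list \<Rightarrow> nat list list" where
  "admissible_extensions d xs =
     (let i = Suc (length xs); used = folded_values d xs
      in [xs @ [x]. x \<leftarrow> [0..<d], (i + x) mod d \<noteq> (d - i + x) mod d
                     \<and> (i + x) mod d \<notin> set used \<and> (d - i + x) mod d \<notin> set used])"

fun admissible :: "nat \<Rightarrow> nat \<Rightarrow> nat list list" where
  "admissible d 0 = [[]]"
| "admissible d (Suc j) = concat (map (admissible_extensions d) (admissible d j))"

lemma folded_values_snoc:
  "folded_values d (xs @ [x]) =
     folded_values d xs @ [(Suc (length xs) + x) mod d, (d - Suc (length xs) + x) mod d]"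
  by (simp add: folded_values_def upt_Suc_append zip_append del: upt_Suc)

lemma length_folded_values: "length (folded_values d xs) = 2 * length xs + 1"
  by (induction xs rule: rev_induct) (simp_all add: folded_values_snoc, simp add: folded_values_def)

lemma set_admissible:
  "set (admissible d j) = {xs. length xs = j \<and> set xs \<subseteq> {..<d} \<and> distinct (folded_values d xs)}"
proof (induction j)
  case 0
  then show ?case by (auto simp: folded_values_def)
next
  case (Suc j)
  show ?case
  proof (intro equalityI subsetI)
    fix ys assume "ys \<in> set (admissible d (Suc j))"
    then show "ys \<in> {xs. length xs = Suc j \<and> set xs \<subseteq> {..<d} \<and> distinct (folded_values d xs)}"
      using Suc.IH by (auto simp: admissible_extensions_def folded_values_snoc Let_def)
  next
    fix ys assume ys: "ys \<in> {xs. length xs = Suc j \<and> set xs \<subseteq> {..<d} \<and> distinct (folded_values d xs)}"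
    then obtain xs x where "ys = xs @ [x]" by (cases ys rule: rev_exhaust) auto
    then show "ys \<in> set (admissible d (Suc j))"
      using ys Suc.IH by (auto simp: admissible_extensions_def folded_values_snoc Let_def)
  qed
qed

lemma inj_on_shift_iff_distinct_folded_values:
  fixes B :: "nat \<Rightarrow> nat"
  assumes d: "d = 2 * m + 1" and B0: "B 0 = 0" and sym: "\<And>i. 0 < i \<Longrightarrow> i < d \<Longrightarrow> B (d - i) = B i"
  shows "inj_on (\<lambda>i. (i + B i) mod d) {..<d} \<longleftrightarrow> distinct (folded_values d (map B [1..<Suc m]))"
proof -
  let ?N = "\<lambda>i. (i + B i) mod d"
  let ?F = "folded_values d (map B [1..<Suc m])"
  have len: "Suc (length (map B [1..<Suc m])) = Suc m" by simp
  have zip: "zip [1..<Suc m] (map B [1..<Suc m]) = map (\<lambda>i. (i, B i)) [1..<Suc m]"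
    by (simp add: zip_map2 zip_same_conv_map comp_def del: upt_Suc)
  have pointwise: "map (\<lambda>i. [?N i, (d - i + B i) mod d]) [1..<Suc m] = map (\<lambda>i. [?N i, ?N (d - i)]) [1..<Suc m]"
  proof (rule map_cong)
    fix i assume "i \<in> set [1..<Suc m]"
    then have "0 < i" "i < d" using d by auto
    then show "[?N i, (d - i + B i) mod d] = [?N i, ?N (d - i)]" using sym by simp
  qed simp
  have F_eq: "?F = 0 # concat (map (\<lambda>i. [?N i, ?N (d - i)]) [1..<Suc m])"
    unfolding folded_values_def len zip map_map comp_def prod.case pointwise ..
  have halves: "{..<d} = insert 0 ({1..m} \<union> (\<lambda>i. d - i) ` {1..m})"
  proof (intro equalityI subsetI)
    fix n assume "n \<in> {..<d}"
    then show "n \<in> insert 0 ({1..m} \<union> (\<lambda>i. d - i) ` {1..m})"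
      using d by (cases "n \<le> m") (auto intro!: image_eqI[of n _ "d - n"])
  qed (use d in auto)
  have "set ?F = ?N ` {..<d}"
    unfolding F_eq halves using B0 by auto
  moreover have "length ?F = d"
    using d by (simp add: length_folded_values)
  ultimately show ?thesis
    by (metis card_distinct distinct_card card_lessThan finite_lessThan inj_on_iff_eq_card)
qed

lemma inj_on_shift_iff_admissible:
  fixes B :: "nat \<Rightarrow> nat"
  assumes "d = 2 * m + 1" "B 0 = 0" "\<And>i. 0 < i \<Longrightarrow> i < d \<Longrightarrow> B (d - i) = B i"
    and "\<And>i. i < d \<Longrightarrow> B i < d"
  shows "inj_on (\<lambda>i. (i + B i) mod d) {..<d} \<longleftrightarrow> map B [1..<Suc m] \<in> set (admissible d m)"
  using assms by (auto simp: set_admissible inj_on_shift_iff_distinct_folded_values)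

lemma replicate_0_admissible:
  assumes d: "d = 2 * m + 1"
  shows "replicate m 0 \<in> set (admissible d m)"
proof -
  have "inj_on (\<lambda>i. (i + 0) mod d) {..<d}" by (simp add: inj_on_def)
  moreover have "map (\<lambda>_. 0::nat) [1..<Suc m] = replicate m 0"
    by (simp add: map_replicate_const del: upt_Suc)
  ultimately show ?thesis using inj_on_shift_iff_admissible[of d m "\<lambda>_. 0"] d by simp
qed

lemma admissible_5: "admissible 5 2 = [[0, 0]]"
  by code_simp

lemma admissible_7: "admissible 7 3 = [[0, 0, 0], [2, 4, 1], [5, 3, 6]]"
  by code_simp

lemma admissible_11: "admissible 11 5 =
  [[0, 0, 0, 0, 0], [0, 5, 5, 2, 10], [0, 6, 6, 9, 1], [2, 0, 7, 1, 1], [2, 4, 2, 0, 3],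
   [2, 8, 1, 9, 2], [3, 5, 9, 1, 4], [3, 10, 6, 3, 0], [4, 4, 7, 5, 2], [4, 8, 10, 8, 3],
   [4, 10, 1, 6, 1], [5, 1, 4, 9, 3], [5, 3, 6, 6, 2], [5, 7, 0, 3, 7], [6, 4, 0, 8, 4],
   [6, 8, 5, 5, 9], [6, 10, 7, 2, 8], [7, 1, 10, 5, 10], [7, 3, 1, 3, 8], [7, 7, 4, 6, 9],
   [8, 1, 5, 8, 0], [8, 6, 2, 10, 7], [9, 0, 4, 10, 10], [9, 3, 10, 2, 9], [9, 7, 9, 0, 8]]"
  by code_simp

lemma sq11_eq: "sq11 = {1, 3, 4, 5, 9}"
proof -
  have residues: "(\<exists>j::int. [j ^ 2 = i] (mod 11)) \<longleftrightarrow> (\<exists>j\<in>{0..10}. [j ^ 2 = i] (mod 11))" for i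
  proof
    assume "\<exists>j. [j ^ 2 = i] (mod 11)"
    then obtain j where "[j ^ 2 = i] (mod 11)" by blast
    moreover have "[(j mod 11) ^ 2 = j ^ 2] (mod 11)" by (simp add: cong_def power_mod)
    ultimately have "[(j mod 11) ^ 2 = i] (mod 11)" using cong_trans by blast
    then show "\<exists>j\<in>{0..10}. [j ^ 2 = i] (mod 11)" by (intro bexI[of _ "j mod 11"]) auto
  qed blast
  have "{0..10::int} = {0, 1, 2, 3, 4, 5, 6, 7, 8, 9, 10}" by auto presburger
  moreover have "{i::int. 1 \<le> i \<and> i \<le> 10} = {1, 2, 3, 4, 5, 6, 7, 8, 9, 10}" by auto presburger
  ultimately show ?thesis
    unfolding sq11_def residues by (auto simp: cong_def)
qed

lemma C11_eq: "C11 = (\<lambda>m i. m * i) ` {3, -3, 5, -5}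
   \<union> (\<lambda>m i. 5 * m^3 * i^4 + m^7 * i^3 - 2 * m * i^2 - 4 * m^5 * i) ` {1, 2, 3, 4, 5, 6, 7, 8, 9, 10}
   \<union> (\<lambda>m i. 4 * m^3 * i^4 + m^7 * i^3 - 2 * m * i^2 - 5 * m^5 * i) ` {1, 2, 3, 4, 5, 6, 7, 8, 9, 10}"
proof -
  have "{m::int. 1 \<le> m \<and> m \<le> 10} = {1, 2, 3, 4, 5, 6, 7, 8, 9, 10}" by auto presburger
  then show ?thesis unfolding C11_def setcompr_eq_image Collect_mem_eq by (simp only:)
qed

lemma exceptional_11_iff:
  "(\<exists>\<psi>\<in>C11. int x1 = \<psi> 1 mod 11 \<and> int x2 = \<psi> 9 mod 11 \<and> int x3 = \<psi> 3 mod 11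
            \<and> int x4 = \<psi> 4 mod 11 \<and> int x5 = \<psi> 5 mod 11)
    \<longleftrightarrow> [x1, x2, x3, x4, x5] \<in> set (tl (admissible 11 5))"
  unfolding C11_eq admissible_11 by (simp add: disj_commute disj_left_commute)

locale fpoly_permutation =
  fixes r v k t :: nat and w :: "'a::{finite,field}" and q s d e c :: nat
  assumes q_def: "q = card (UNIV :: 'a set)"
    and s_def: "s = gcd v (q - 1)" and d_def: "d = (q - 1) div s" and e_def: "e = v div s"
    and c_def: "c = 2 * r + (k - 1) * v * t"
    and pos: "0 < r" "0 < v" "0 < k" "0 < t"
    and gcd_r_s: "gcd r s = 1" and gcd_d_k: "gcd d k = 1"
    and gcd_d_c: "gcd d (2 * r + v * t * (k - 1)) \<le> 2"
    and k_power_cong: "[int k ^ (s * t) = (-1) ^ ((d + 1) * (r + 1))] (mod int (semiring_char TYPE('a)))"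
    and d_prime: "prime d" and d_odd: "odd d"
    and w_order: "has_order w d"
begin

lemma s_times_d: "s * d = q - 1"
  using d_def s_def by simp

lemma s_times_e: "s * e = v"
  using e_def s_def by simp

lemma d_ge_3: "3 \<le> d"
proof -
  have "2 \<le> d" using prime_ge_2_nat[OF d_prime] .
  moreover have "d \<noteq> 2" using d_odd by auto
  ultimately show ?thesis by linarith
qed

lemma d_eq: "d = 2 * (d div 2) + 1"
  using odd_two_times_div_two_succ[OF d_odd] by simp

lemma coprime_e_d: "coprime e d"
  using div_gcd_coprime[of v "q - 1"] pos s_def d_def e_def by simp

lemma not_dvd_c: "\<not> d dvd c"
proof
  assume "d dvd c"
  then have "gcd d (2 * r + v * t * (k - 1)) = d"
    using c_def by (simp add: mult_ac gcd_nat.absorb1)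
  then show False using gcd_d_c d_ge_3 by simp
qed

lemma not_dvd_k: "\<not> d dvd k"
proof
  assume "d dvd k"
  then have "gcd d k = d" by (simp add: gcd_nat.absorb1)
  then show False using gcd_d_k d_ge_3 by simp
qed

lemma not_dvd_e: "\<not> d dvd e"
proof
  assume "d dvd e"
  then have "d = 1" using coprime_common_divisor_nat[OF coprime_e_d _ dvd_refl] by simp
  then show False using d_ge_3 by simp
qed

definition eta :: 'a where "eta = w ^ c"

lemma eta_order: "has_order eta d"
  unfolding eta_def
proof (rule has_order_power_coprime[OF w_order])
  show "coprime c d" using prime_imp_coprime[OF d_prime not_dvd_c] by (rule coprime_commute[THEN iffD1])
qed

lemma bij_fpoly_iff_roots_unity:
  "bij (fpoly r v k t :: 'a \<Rightarrow> 'a)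
    \<longleftrightarrow> bij_betw (\<lambda>y::'a. y ^ r * (hk k (y ^ e) ^ t) ^ s) (roots_unity d) (roots_unity d)"
proof -
  have "fpoly r v k t = (\<lambda>x::'a. x ^ r * hk k ((x ^ s) ^ e) ^ t)"
    by (rule ext) (simp only: fpoly_def s_times_e[symmetric] power_mult)
  moreover have "bij (\<lambda>x::'a. x ^ r * hk k ((x ^ s) ^ e) ^ t)
    \<longleftrightarrow> bij_betw (\<lambda>y::'a. y ^ r * (hk k (y ^ e) ^ t) ^ s) (roots_unity d) (roots_unity d)"
  proof (rule bij_power_mult_compose_iff[where h = "\<lambda>y. hk k (y ^ e) ^ t"])
    show "coprime r s" using gcd_r_s coprime_iff_gcd_eq_1 by blast
    show "s * d = card (UNIV :: 'a set) - 1" using s_times_d q_def by simp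
  qed (rule pos(1))
  ultimately show ?thesis by simp
qed

definition rho :: "nat \<Rightarrow> 'a" where "rho i = sine_ratio k (w ^ (i * e)) ^ (s * t)"

(* The discrete logarithm of rho i to base eta; rho 0 is junk (sine_ratio k 1 = 0 / 0). *)
definition shift :: "nat \<Rightarrow> nat" where
  "shift i = (if i = 0 then 0 else SOME j. j < d \<and> eta ^ j = rho i)"

lemma w_power_nondegenerate:
  assumes "0 < i" "i < d"
  shows "w ^ (i * e) \<noteq> 0" "(w ^ (i * e)) ^ 2 \<noteq> 1" "((w ^ (i * e)) ^ 2) ^ k \<noteq> 1"
proof -
  have "\<not> d dvd 2" "\<not> d dvd i" using d_ge_3 assms by (auto dest: dvd_imp_le)
  then have "\<not> d dvd 2 * i * e" "\<not> d dvd 2 * i * e * k"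
    using not_dvd_e not_dvd_k by (simp_all add: prime_dvd_mult_iff[OF d_prime])
  moreover have "(w ^ (i * e)) ^ 2 = w ^ (2 * i * e)" "((w ^ (i * e)) ^ 2) ^ k = w ^ (2 * i * e * k)"
    by (simp_all add: power_mult[symmetric] mult_ac)
  ultimately show "(w ^ (i * e)) ^ 2 \<noteq> 1" "((w ^ (i * e)) ^ 2) ^ k \<noteq> 1"
    using has_order_power_eq_1_iff[OF w_order] by simp_all
  show "w ^ (i * e) \<noteq> 0" using has_order_nonzero[OF w_order] by simp
qed

lemma rho_in_roots_unity:
  assumes "0 < i" "i < d"
  shows "rho i \<in> roots_unity d"
proof -
  have "sine_ratio k (w ^ (i * e)) \<noteq> 0"
    using sine_ratio_nonzero w_power_nondegenerate[OF assms] by blast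
  then have "sine_ratio k (w ^ (i * e)) ^ (s * d) = 1"
    using power_card_minus_1_eq_1 s_times_d q_def by simp
  then have "(sine_ratio k (w ^ (i * e)) ^ (s * d)) ^ t = 1" by simp
  moreover have "rho i ^ d = (sine_ratio k (w ^ (i * e)) ^ (s * d)) ^ t"
    unfolding rho_def by (simp add: power_mult[symmetric] mult_ac)
  ultimately show ?thesis by (simp add: roots_unity_def)
qed

lemma shift_spec:
  assumes "0 < i" "i < d"
  shows "shift i < d \<and> eta ^ shift i = rho i"
proof -
  have "\<exists>j. j < d \<and> eta ^ j = rho i"
    using rho_in_roots_unity[OF assms] roots_unity_eq_powers[OF eta_order] by auto
  then have "(SOME j. j < d \<and> eta ^ j = rho i) < d \<and> eta ^ (SOME j. j < d \<and> eta ^ j = rho i) = rho i"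
    by (rule someI_ex)
  then show ?thesis using assms unfolding shift_def by simp
qed

lemma shift_less: "i < d \<Longrightarrow> shift i < d"
  using shift_spec[of i] d_ge_3 by (cases "i = 0") (simp_all add: shift_def)

lemma shift_0 [simp]: "shift 0 = 0"
  by (simp add: shift_def)

lemma eta_power_inj: "a < d \<Longrightarrow> b < d \<Longrightarrow> eta ^ a = eta ^ b \<longleftrightarrow> a = b"
  using has_order_power_eq_iff[OF eta_order] by simp

lemma shift_sym:
  assumes "0 < i" "i < d"
  shows "shift (d - i) = shift i"
proof -
  have "w ^ ((d - i) * e) * w ^ (i * e) = w ^ (d * e)"
    using assms by (simp flip: power_add add_mult_distrib)
  also have "\<dots> = 1" using w_order by (simp add: power_mult has_order_def)
  finally have "w ^ ((d - i) * e) = inverse (w ^ (i * e))"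
    using has_order_nonzero[OF w_order] by (simp add: field_simps)
  then have "rho (d - i) = rho i" by (simp add: rho_def sine_ratio_inverse)
  moreover have "0 < d - i" "d - i < d" using assms by auto
  ultimately show ?thesis
    using shift_spec[OF assms] shift_spec[of "d - i"] eta_power_inj by metis
qed

lemma k_power_eq_1: "(of_nat k :: 'a) ^ (s * t) = 1"
proof -
  have "[int k ^ (s * t) = 1] (mod int CHAR('a))" using k_power_cong d_odd by simp
  then have "(of_int (int k ^ (s * t)) :: 'a) = of_int 1"
    by (simp only: of_int_eq_iff_cong_CHAR)
  then show ?thesis by simp
qed

lemma power_map_at_even_power:
  assumes "i < d"
  shows "(w ^ (2 * i)) ^ r * (hk k ((w ^ (2 * i)) ^ e) ^ t) ^ s = eta ^ ((i + shift i) mod d)"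
proof (cases "i = 0")
  case True
  then show ?thesis using k_power_eq_1 by (simp add: hk_def mult.commute flip: power_mult)
next
  case False
  then have i: "0 < i" "i < d" using assms by auto
  let ?u = "w ^ (i * e)"
  have ue: "(w ^ (2 * i)) ^ e = ?u ^ 2" by (simp add: power_mult[symmetric] mult_ac)
  have hk: "hk k (?u ^ 2) = ?u ^ (k - 1) * sine_ratio k ?u"
    using hk_square_eq_sine_ratio w_power_nondegenerate[OF i] pos(3) by blast
  have "(hk k ((w ^ (2 * i)) ^ e) ^ t) ^ s = (?u ^ (k - 1)) ^ (t * s) * rho i"
    unfolding ue hk rho_def by (simp add: power_mult_distrib power_mult[symmetric] mult_ac)
  moreover have "(w ^ (2 * i)) ^ r * (?u ^ (k - 1)) ^ (t * s) = eta ^ i"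
  proof -
    have exponent: "2 * i * r + i * e * (k - 1) * (t * s) = c * i"
      unfolding c_def s_times_e[symmetric] by (simp add: algebra_simps)
    have "(w ^ (2 * i)) ^ r * (?u ^ (k - 1)) ^ (t * s) = w ^ (2 * i * r + i * e * (k - 1) * (t * s))"
      by (simp only: power_add power_mult)
    also have "\<dots> = eta ^ i"
      unfolding exponent eta_def by (simp only: power_mult)
    finally show ?thesis .
  qed
  ultimately have "(w ^ (2 * i)) ^ r * (hk k ((w ^ (2 * i)) ^ e) ^ t) ^ s = eta ^ (i + shift i)"
    using shift_spec[OF i] by (simp add: power_add mult.assoc)
  then show ?thesis using has_order_power_mod[OF eta_order] by metis
qed

lemma bij_fpoly_iff_inj_shift:
  "bij (fpoly r v k t :: 'a \<Rightarrow> 'a) \<longleftrightarrow> inj_on (\<lambda>i. (i + shift i) mod d) {..<d}"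
proof -
  let ?g = "\<lambda>y::'a. y ^ r * (hk k (y ^ e) ^ t) ^ s"
  let ?N = "\<lambda>i. (i + shift i) mod d"
  have "has_order (w ^ 2) d"
    using has_order_power_coprime[OF w_order] d_odd by simp
  then have \<mu>: "roots_unity d = (\<lambda>i. w ^ (2 * i)) ` {..<d}" and inj: "inj_on (\<lambda>i. w ^ (2 * i)) {..<d}"
    using roots_unity_eq_powers inj_on_powers by (simp_all add: power_mult)
  have g_powers: "?g (w ^ (2 * i)) = eta ^ ?N i" if "i < d" for i
    using power_map_at_even_power[OF that] .
  have "?g ` roots_unity d \<subseteq> roots_unity d"
  proof
    fix y :: 'a assume "y \<in> ?g ` roots_unity d"
    then obtain i where "i < d" "y = ?g (w ^ (2 * i))" unfolding \<mu> by auto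
    then have "y = eta ^ ?N i" using g_powers by simp
    moreover have "?N i < d" using d_ge_3 by simp
    ultimately show "y \<in> roots_unity d" unfolding roots_unity_eq_powers[OF eta_order] by blast
  qed
  then have "bij_betw ?g (roots_unity d) (roots_unity d) \<longleftrightarrow> inj_on ?g (roots_unity d)"
    using endo_inj_surj[of "roots_unity d" ?g] by (auto simp: bij_betw_def)
  then have "bij (fpoly r v k t :: 'a \<Rightarrow> 'a) \<longleftrightarrow> inj_on ?g (roots_unity d)"
    using bij_fpoly_iff_roots_unity by simp
  also have "\<dots> \<longleftrightarrow> inj_on (\<lambda>i. eta ^ ?N i) {..<d}"
    unfolding \<mu> comp_inj_on_iff[OF inj] by (rule inj_on_cong) (simp add: g_powers)
  also have "\<dots> \<longleftrightarrow> inj_on ?N {..<d}"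
    using eta_power_inj d_ge_3 by (auto simp: inj_on_def)
  finally show ?thesis .
qed

definition profile :: "nat list" where "profile = map shift [1..<Suc (d div 2)]"

lemma bij_fpoly_iff_profile_admissible:
  "bij (fpoly r v k t :: 'a \<Rightarrow> 'a) \<longleftrightarrow> profile \<in> set (admissible d (d div 2))"
  unfolding bij_fpoly_iff_inj_shift profile_def
  using d_eq shift_sym shift_less by (intro inj_on_shift_iff_admissible) auto

lemma cond_star_iff_shift_eq_0:
  "cond_star d k s t TYPE('a) \<longleftrightarrow> (\<forall>i. 0 < i \<and> i < d \<longrightarrow> shift i = 0)"
proof -
  have u: "has_order (w ^ e) d" using has_order_power_coprime[OF w_order coprime_e_d] .
  have "(w ^ e) ^ i = 1 \<longleftrightarrow> i = 0" if "i < d" for i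
    using that has_order_power_eq_1_iff[OF u] by (auto dest: dvd_imp_le)
  then have nontrivial: "roots_unity d - roots_unity 1 = (\<lambda>i. (w ^ e) ^ i) ` {i. 0 < i \<and> i < d}"
    unfolding roots_unity_eq_powers[OF u] by (auto simp: roots_unity_def)
  have "rho i = sine_ratio k ((w ^ e) ^ i) ^ (s * t)" for i
    by (simp add: rho_def mult.commute power_mult)
  moreover have "rho i = 1 \<longleftrightarrow> shift i = 0" if "0 < i" "i < d" for i
    using shift_spec[OF that] eta_power_inj[of "shift i" 0] d_ge_3 by auto
  ultimately show ?thesis
    unfolding cond_star_def nontrivial by (auto simp: roots_unity_def sine_ratio_def)
qed

lemma shift_eq_0_iff_lower_half:
  "(\<forall>i. 0 < i \<and> i < d \<longrightarrow> shift i = 0) \<longleftrightarrow> (\<forall>i\<in>{1..d div 2}. shift i = 0)"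
proof
  assume "\<forall>i. 0 < i \<and> i < d \<longrightarrow> shift i = 0"
  then show "\<forall>i\<in>{1..d div 2}. shift i = 0" using d_eq by auto
next
  assume half: "\<forall>i\<in>{1..d div 2}. shift i = 0"
  show "\<forall>i. 0 < i \<and> i < d \<longrightarrow> shift i = 0"
  proof (intro allI impI)
    fix i assume i: "0 < i \<and> i < d"
    show "shift i = 0"
    proof (cases "i \<le> d div 2")
      case True
      then show ?thesis using half i by auto
    next
      case False
      then have "d - i \<in> {1..d div 2}" using i d_eq by auto
      moreover have "shift i = shift (d - i)" using shift_sym[of "d - i"] i by simp
      ultimately show ?thesis using half by simp
    qed
  qed
qed

lemma cond_star_iff_profile_eq_0:
  "cond_star d k s t TYPE('a) \<longleftrightarrow> profile = replicate (d div 2) 0"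
proof -
  have "profile = replicate (d div 2) 0 \<longleftrightarrow> (\<forall>i\<in>{1..d div 2}. shift i = 0)"
  proof
    assume "profile = replicate (d div 2) 0"
    then have "\<forall>x\<in>set profile. x = 0" by simp
    then show "\<forall>i\<in>{1..d div 2}. shift i = 0" by (auto simp: profile_def)
  next
    assume "\<forall>i\<in>{1..d div 2}. shift i = 0"
    then show "profile = replicate (d div 2) 0" by (intro replicate_eqI) (auto simp: profile_def)
  qed
  then show ?thesis using cond_star_iff_shift_eq_0 shift_eq_0_iff_lower_half by simp
qed

lemma ratio_power_eq_iff:
  assumes "0 < i" "i < d"
  shows "ratio w k e (int i) ^ (s * t) = w powi (int c * m) \<longleftrightarrow> int (shift i) = m mod int d"
proof -
  have "w powi (int c * m) = eta powi m" by (simp add: eta_def power_int_power)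
  then have "ratio w k e (int i) ^ (s * t) = w powi (int c * m) \<longleftrightarrow> eta ^ shift i = eta powi m"
    using shift_spec[OF assms] by (simp add: ratio_eq_sine_ratio rho_def)
  also have "\<dots> \<longleftrightarrow> int (shift i) mod int d = m mod int d"
    by (rule has_order_power_eq_power_int_iff[OF eta_order])
  also have "int (shift i) mod int d = int (shift i)"
    using shift_less[of i] assms by simp
  finally show ?thesis .
qed

lemma bij_if_cond_star: "cond_star d k s t TYPE('a) \<Longrightarrow> bij (fpoly r v k t :: 'a \<Rightarrow> 'a)"
  using bij_fpoly_iff_profile_admissible cond_star_iff_profile_eq_0 replicate_0_admissible d_eq
  by simp

lemma shift_1_eq_0_if_d_eq_3:
  assumes d3: "d = 3"
  shows "shift 1 = 0"
proof -
  let ?u = "w ^ e"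
  have u: "has_order ?u 3" using has_order_power_coprime[OF w_order coprime_e_d] d3 by simp
  have "?u * ?u ^ 2 = ?u ^ 3" by (simp add: power2_eq_square power3_eq_cube)
  then have "?u * ?u ^ 2 = 1" using has_order_power_eq_1_iff[OF u, of 3] by simp
  then have inv: "inverse ?u = ?u ^ 2" by (rule inverse_unique)
  have "?u \<noteq> 1" using has_order_power_eq_1_iff[OF u, of 1] by simp
  then have ne: "?u - ?u ^ 2 \<noteq> 0"
    using has_order_nonzero[OF u] by (auto simp: power2_eq_square)
  have pow: "?u ^ n = ?u ^ (n mod 3)" for n using has_order_power_mod[OF u] .
  have sq: "(?u ^ 2) ^ k = ?u ^ ((2 * k) mod 3)" by (metis power_mult pow)
  have "k mod 3 = 1 \<and> (2 * k) mod 3 = 2 \<or> k mod 3 = 2 \<and> (2 * k) mod 3 = 1"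
    using not_dvd_k d3 by presburger
  then have "sine_ratio k ?u = 1 \<or> sine_ratio k ?u = -1"
  proof (elim disjE conjE)
    assume "k mod 3 = 1" "(2 * k) mod 3 = 2"
    then show ?thesis using ne pow[of k] sq by (simp add: sine_ratio_def inv)
  next
    assume "k mod 3 = 2" "(2 * k) mod 3 = 1"
    then have "sine_ratio k ?u = (?u ^ 2 - ?u) / (?u - ?u ^ 2)"
      using pow[of k] sq by (simp add: sine_ratio_def inv)
    also have "\<dots> = -1" using ne by (simp add: field_simps)
    finally show ?thesis by simp
  qed
  then have "rho 1 = 1 \<or> rho 1 = -1"
    by (cases "even (s * t)") (auto simp: rho_def)
  moreover have "rho 1 ^ 3 = 1" using rho_in_roots_unity[of 1] d3 by (simp add: roots_unity_def)
  ultimately have "rho 1 = 1" by auto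
  then show ?thesis using shift_spec[of 1] eta_power_inj[of "shift 1" 0] d3 by simp
qed

lemma bij_if_d_eq_3:
  assumes "d = 3"
  shows "bij (fpoly r v k t :: 'a \<Rightarrow> 'a)"
proof -
  have "d div 2 = 1" using assms by simp
  then have "profile = replicate (d div 2) 0"
    using shift_1_eq_0_if_d_eq_3[OF assms] by (simp add: profile_def)
  then show ?thesis using bij_if_cond_star cond_star_iff_profile_eq_0 by simp
qed

lemma bij_iff_cond_star_if_d_eq_5:
  assumes "d = 5"
  shows "bij (fpoly r v k t :: 'a \<Rightarrow> 'a) \<longleftrightarrow> cond_star d k s t TYPE('a)"
proof -
  have "replicate 2 (0::nat) = [0, 0]" by (simp add: numeral_2_eq_2)
  then have "set (admissible d (d div 2)) = {replicate (d div 2) 0}"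
    using assms by (simp add: admissible_5)
  then show ?thesis using bij_fpoly_iff_profile_admissible cond_star_iff_profile_eq_0 by simp
qed

lemma bij_iff_if_d_eq_7:
  assumes d7: "d = 7"
  shows "bij (fpoly r v k t :: 'a \<Rightarrow> 'a) \<longleftrightarrow> cond_star d k s t TYPE('a) \<or>
    (\<exists>\<epsilon>\<in>{1, -1::int}. \<forall>i\<in>{1, 2, 4::int}. ratio w k e i ^ (s * t) = w powi (2 * \<epsilon> * int c * i))"
proof -
  have "d div 2 = 3" using d7 by simp
  then have profile: "profile = [shift 1, shift 2, shift 3]"
    by (simp add: profile_def upt_rec eval_nat_numeral)
  have shift_4: "shift 4 = shift 3" using shift_sym[of 3] d7 by simp
  have residue: "ratio w k e i ^ (s * t) = w powi (2 * \<epsilon> * int c * i)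
      \<longleftrightarrow> int (shift (nat i)) = 2 * \<epsilon> * i mod 7" if "i \<in> {1, 2, 4}" for \<epsilon> i
  proof -
    have "0 < nat i" "nat i < d" "int (nat i) = i" using that d7 by auto
    moreover have reorder: "2 * \<epsilon> * int c * i = int c * (2 * \<epsilon> * i)" by (simp add: mult_ac)
    ultimately show ?thesis
      unfolding reorder using ratio_power_eq_iff[of "nat i" "2 * \<epsilon> * i"] d7 by simp
  qed
  have "(\<exists>\<epsilon>\<in>{1, -1::int}. \<forall>i\<in>{1, 2, 4::int}. ratio w k e i ^ (s * t) = w powi (2 * \<epsilon> * int c * i))
    \<longleftrightarrow> (\<exists>\<epsilon>\<in>{1, -1::int}. \<forall>i\<in>{1, 2, 4::int}. int (shift (nat i)) = 2 * \<epsilon> * i mod 7)"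
    (is "?alternative \<longleftrightarrow> _")
    using residue by (intro bex_cong ball_cong) auto
  also have "\<dots> \<longleftrightarrow> profile \<in> set (tl (admissible 7 3))"
    unfolding profile admissible_7 using shift_4 by auto
  finally have alternative: "?alternative \<longleftrightarrow> profile \<in> set (tl (admissible 7 3))" .
  have "replicate 3 (0::nat) = [0, 0, 0]" by (simp add: eval_nat_numeral)
  then have "set (admissible d (d div 2)) = insert (replicate (d div 2) 0) (set (tl (admissible 7 3)))"
    using d7 by (simp add: admissible_7)
  then show ?thesis
    using alternative bij_fpoly_iff_profile_admissible cond_star_iff_profile_eq_0 by auto
qed

lemma bij_iff_if_d_eq_11:
  assumes d11: "d = 11"
  shows "bij (fpoly r v k t :: 'a \<Rightarrow> 'a) \<longleftrightarrow> cond_star d k s t TYPE('a) \<or>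
    (\<exists>\<psi>\<in>C11. \<forall>i\<in>sq11. ratio w k e i ^ (s * t) = w powi (int c * \<psi> i))"
proof -
  have "d div 2 = 5" using d11 by simp
  then have profile: "profile = [shift 1, shift 2, shift 3, shift 4, shift 5]"
    by (simp add: profile_def upt_rec eval_nat_numeral)
  have shift_9: "shift 9 = shift 2" using shift_sym[of 2] d11 by simp
  have residue: "ratio w k e i ^ (s * t) = w powi (int c * \<psi> i) \<longleftrightarrow> int (shift (nat i)) = \<psi> i mod 11"
    if "i \<in> {1, 3, 4, 5, 9}" for \<psi> :: "int \<Rightarrow> int" and i
  proof -
    have "0 < nat i" "nat i < d" "int (nat i) = i" using that d11 by auto
    then show ?thesis using ratio_power_eq_iff[of "nat i" "\<psi> i"] d11 by simp
  qed
  have "(\<exists>\<psi>\<in>C11. \<forall>i\<in>sq11. ratio w k e i ^ (s * t) = w powi (int c * \<psi> i))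
    \<longleftrightarrow> (\<exists>\<psi>\<in>C11. \<forall>i\<in>{1, 3, 4, 5, 9::int}. int (shift (nat i)) = \<psi> i mod 11)"
    (is "?alternative \<longleftrightarrow> _")
    unfolding sq11_eq using residue by (intro bex_cong ball_cong) auto
  also have "\<dots> \<longleftrightarrow> (\<exists>\<psi>\<in>C11. int (shift 1) = \<psi> 1 mod 11 \<and> int (shift 2) = \<psi> 9 mod 11
      \<and> int (shift 3) = \<psi> 3 mod 11 \<and> int (shift 4) = \<psi> 4 mod 11 \<and> int (shift 5) = \<psi> 5 mod 11)"
    using shift_9 by (intro bex_cong) auto
  also have "\<dots> \<longleftrightarrow> profile \<in> set (tl (admissible 11 5))"
    unfolding profile by (rule exceptional_11_iff)
  finally have alternative: "?alternative \<longleftrightarrow> profile \<in> set (tl (admissible 11 5))" .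
  have "replicate 5 (0::nat) = [0, 0, 0, 0, 0]" by (simp add: eval_nat_numeral)
  then have "set (admissible d (d div 2)) = insert (replicate (d div 2) 0) (set (tl (admissible 11 5)))"
    using d11 by (simp add: admissible_11)
  then show ?thesis
    using alternative bij_fpoly_iff_profile_admissible cond_star_iff_profile_eq_0 by auto
qed

end

theorem corollary3p5:
  fixes r v k t :: nat and \<omega> :: "'a::{finite,field}"
  defines "q \<equiv> card (UNIV :: 'a set)"
  defines "p \<equiv> semiring_char TYPE('a)"
  defines "s \<equiv> gcd v (q - 1)"
  defines "d \<equiv> (q - 1) div s"
  defines "e \<equiv> v div s"
  defines "f \<equiv> (fpoly r v k t :: 'a \<Rightarrow> 'a)"
  defines "c \<equiv> 2 * r + (k - 1) * v * t"
  assumes pos: "0 < r" "0 < v" "0 < k" "0 < t"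
  assumes gcd1: "gcd r s = 1" and gcd2: "gcd d k = 1"
  assumes gcd3: "gcd d (2 * r + v * t * (k - 1)) \<le> 2"
  assumes cong: "[int k ^ (s * t) = (-1) ^ ((d + 1) * (r + 1))] (mod int p)"
  assumes dprime: "prime d" and dodd: "odd d"
  assumes ord: "has_order \<omega> d"
  shows "(cond_star d k s t TYPE('a) \<longrightarrow> bij f)
       \<and> (d = 3 \<longrightarrow> bij f)
       \<and> (d = 5 \<longrightarrow> (bij f \<longleftrightarrow> cond_star d k s t TYPE('a)))
       \<and> (d = 7 \<longrightarrow> (bij f \<longleftrightarrow> cond_star d k s t TYPE('a) \<or>
             (\<exists>\<epsilon>\<in>{1, -1::int}. \<forall>i\<in>{1, 2, 4::int}.
                 ratio \<omega> k e i ^ (s * t) = \<omega> powi (2 * \<epsilon> * int c * i))))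
       \<and> (d = 11 \<longrightarrow> (bij f \<longleftrightarrow> cond_star d k s t TYPE('a) \<or>
             (\<exists>\<psi>\<in>C11. \<forall>i\<in>sq11.
                 ratio \<omega> k e i ^ (s * t) = \<omega> powi (int c * \<psi> i))))"
proof -
  interpret fpoly_permutation r v k t \<omega> q s d e c
    using pos gcd1 gcd2 gcd3 cong dprime dodd ord
    by unfold_locales (simp_all add: q_def s_def d_def e_def c_def p_def)
  show ?thesis
    unfolding f_def
    using bij_if_cond_star bij_if_d_eq_3 bij_iff_cond_star_if_d_eq_5 bij_iff_if_d_eq_7 bij_iff_if_d_eq_11
    by blast
qed

end
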